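(* Let $\mathbb M=(M,d)$ be an unbounded metric space whose group of isometries $\mathrm{Aut}(\mathbb M)$ acts transitively on $M$. Suppose that for some $t\in\mathbb{R}_+^*$ the set $\mathrm{spec}(\mathbb M)\cap[t,+\infty)$ is uncountable and every bounded subspace of $\mathbb M$ is $t$-totally bounded. Then $$\mathrm{age}_t(\mathbb M):=\{\text{isometry type of }\mathbb M_{\restriction X}: X\subseteq M\text{ finite},\ d(\mathbb M_{\restriction X})\ge t\}$$ is an ideal contained in $\mathrm{age}(\mathbb M)$ which is not representable.
   Context: For a metric space $\mathbb M=(M,d)$: $\mathrm{spec}(\mathbb M)=\{d(x,y):x,y\in M\}$; $d(\mathbb M):=\inf(\mathrm{spec}(\mathbb M)\setminus\{0\})$, with $d(\mathbb M)=+\infty$ if $|M|\le 1$; $\mathbb M_{\restriction X}$ is the subspace on $X$. $\omega_t(\mathbb M):=\sup\{|X|:X\subseteq M,\ d(\mathbb M_{\restriction X})\ge t\}$, and $\mathbb M$ is $t$-totally bounded if $\omega_t(\mathbb M)$ is finite. Finite metric spaces are considered up to isometry and ordered by isometric embeddability; $\mathrm{age}(\mathbb M)$ is the set of isometry types of finite subspaces of $\mathbb M$. An ideal is a non-empty, downward closed, up-directed set of such isometry types; it is representable if it equals $\mathrm{age}(\mathbb M')$ for some metric space $\mathbb M'$. *)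

theory Defs
  imports "HOL-Analysis.Analysis" "HOL-Library.Countable_Set"
begin

text \<open>The minimal distance of a subspace X: inf of nonzero distances, +infinity if card X \<le> 1.\<close>
definition mindist :: "'a set \<Rightarrow> ('a \<Rightarrow> 'a \<Rightarrow> real) \<Rightarrow> ereal" where
  "mindist X d = Inf {ereal (d x y) | x y. x \<in> X \<and> y \<in> X \<and> x \<noteq> y}"

definition spec :: "'a set \<Rightarrow> ('a \<Rightarrow> 'a \<Rightarrow> real) \<Rightarrow> real set" where
  "spec M d = {d x y | x y. x \<in> M \<and> y \<in> M}"

definition omega_t :: "'a set \<Rightarrow> ('a \<Rightarrow> 'a \<Rightarrow> real) \<Rightarrow> real \<Rightarrow> enat" where
  "omega_t M d t = (SUP X \<in> {X. X \<subseteq> M \<and> mindist X d \<ge> ereal t}.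
                     (if finite X then enat (card X) else \<infinity>))"

definition t_totally_bounded :: "'a set \<Rightarrow> ('a \<Rightarrow> 'a \<Rightarrow> real) \<Rightarrow> real \<Rightarrow> bool" where
  "t_totally_bounded M d t \<longleftrightarrow> omega_t M d t \<noteq> \<infinity>"

definition isometry_on :: "'a set \<Rightarrow> ('a \<Rightarrow> 'a \<Rightarrow> real) \<Rightarrow> ('a \<Rightarrow> 'a) \<Rightarrow> bool" where
  "isometry_on M d f \<longleftrightarrow> bij_betw f M M \<and> (\<forall>x\<in>M. \<forall>y\<in>M. d (f x) (f y) = d x y)"

definition aut_transitive :: "'a set \<Rightarrow> ('a \<Rightarrow> 'a \<Rightarrow> real) \<Rightarrow> bool" where
  "aut_transitive M d \<longleftrightarrow> (\<forall>x\<in>M. \<forall>y\<in>M. \<exists>f. isometry_on M d f \<and> f x = y)"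

text \<open>Isometry types of finite metric spaces: the set of all isometric copies on finite
  subsets of nat (values of the distance outside the carrier are irrelevant).\<close>
type_synonym fmrep = "nat set \<times> (nat \<Rightarrow> nat \<Rightarrow> real)"

definition iso_type :: "'a set \<Rightarrow> ('a \<Rightarrow> 'a \<Rightarrow> real) \<Rightarrow> fmrep set" where
  "iso_type X d = {(A, D). finite A \<and>
      (\<exists>f. bij_betw f A X \<and> (\<forall>x\<in>A. \<forall>y\<in>A. D x y = d (f x) (f y)))}"

definition is_fm_type :: "fmrep set \<Rightarrow> bool" where
  "is_fm_type \<tau> \<longleftrightarrow> (\<exists>(A::nat set) D. finite A \<and> Metric_space A D \<and> \<tau> = iso_type A D)"

definition fm_embeds :: "fmrep set \<Rightarrow> fmrep set \<Rightarrow> bool" where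
  "fm_embeds \<sigma> \<tau> \<longleftrightarrow> (\<exists>(A, D)\<in>\<sigma>. \<exists>(B, E)\<in>\<tau>. \<exists>f. inj_on f A \<and> f ` A \<subseteq> B \<and>
      (\<forall>x\<in>A. \<forall>y\<in>A. E (f x) (f y) = D x y))"

definition age :: "'a set \<Rightarrow> ('a \<Rightarrow> 'a \<Rightarrow> real) \<Rightarrow> fmrep set set" where
  "age M d = {iso_type X d | X. X \<subseteq> M \<and> finite X}"

definition age_t :: "'a set \<Rightarrow> ('a \<Rightarrow> 'a \<Rightarrow> real) \<Rightarrow> real \<Rightarrow> fmrep set set" where
  "age_t M d t = {iso_type X d | X. X \<subseteq> M \<and> finite X \<and> mindist X d \<ge> ereal t}"

definition is_ideal :: "fmrep set set \<Rightarrow> bool" where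
  "is_ideal I \<longleftrightarrow> I \<noteq> {} \<and> (\<forall>\<tau>\<in>I. is_fm_type \<tau>) \<and>
     (\<forall>\<tau>\<in>I. \<forall>\<sigma>. is_fm_type \<sigma> \<and> fm_embeds \<sigma> \<tau> \<longrightarrow> \<sigma> \<in> I) \<and>
     (\<forall>\<tau>\<in>I. \<forall>\<sigma>\<in>I. \<exists>\<rho>\<in>I. fm_embeds \<tau> \<rho> \<and> fm_embeds \<sigma> \<rho>)"

definition representable :: "'b itself \<Rightarrow> fmrep set set \<Rightarrow> bool" where
  "representable _ I \<longleftrightarrow> (\<exists>(M'::'b set) d'. Metric_space M' d' \<and> I = age M' d')"

end

theory Submission
  imports Defs
begin

text \<open>
  Given finite \<open>t\<close>-separated sets \<open>X, Y \<subseteq> M\<close>, unboundedness and transitivity yield an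
  isometry \<open>g\<close> moving \<open>Y\<close> so far away from \<open>X\<close> that \<open>X \<union> g Y\<close> is still
  \<open>t\<close>-separated; hence \<open>age_t\<close> is directed, and it is obviously downward closed.

  Suppose \<open>age_t M = age M'\<close>. A finite subset of a closed ball of radius \<open>R\<close> around
  \<open>x'\<close> in \<open>M'\<close>, together with \<open>x'\<close>, is isometric to a \<open>t\<close>-separated subset of \<open>M\<close>,
  which transitivity moves into the closed ball of radius \<open>R\<close> around a fixed point of \<open>M\<close>;
  there \<open>t\<close>-total boundedness bounds its size. So the balls of \<open>M'\<close> are finite, and
  \<open>M'\<close> and its spectrum are countable. But two points of \<open>M\<close> at distance \<open>\<ge> t\<close> form
  a \<open>t\<close>-separated pair, so the uncountable set \<open>spec M \<inter> [t, \<infinity>)\<close> lies in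
  \<open>spec M'\<close>.
\<close>

lemma mindist_ge_iff:
  "ereal t \<le> mindist X d \<longleftrightarrow> (\<forall>x\<in>X. \<forall>y\<in>X. x \<noteq> y \<longrightarrow> t \<le> d x y)"
  unfolding mindist_def by (auto simp: le_Inf_iff) (metis ereal_less_eq(3))

lemma mindist_antimono: "Y \<subseteq> X \<Longrightarrow> mindist X d \<le> mindist Y d"
  unfolding mindist_def by (rule Inf_superset_mono) blast

lemma iso_type_subset:
  assumes "bij_betw h A X" "\<And>x y. x \<in> A \<Longrightarrow> y \<in> A \<Longrightarrow> D x y = d (h x) (h y)"
  shows "iso_type A D \<subseteq> iso_type X d"
proof
  fix p assume "p \<in> iso_type A D"
  then obtain B E g where p: "p = (B, E)" "finite B" "bij_betw g B A"
      "\<forall>x\<in>B. \<forall>y\<in>B. E x y = D (g x) (g y)"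
    unfolding iso_type_def by auto
  have "bij_betw (h \<circ> g) B X" using p(3) assms(1) by (rule bij_betw_trans)
  moreover have "E x y = d ((h \<circ> g) x) ((h \<circ> g) y)" if "x \<in> B" "y \<in> B" for x y
    using that p(4) assms(2)[of "g x" "g y"] bij_betwE[OF p(3)] by simp
  ultimately show "p \<in> iso_type X d" using p unfolding iso_type_def by blast
qed

lemma iso_type_eqI:
  assumes h: "bij_betw h A X" and dist: "\<And>x y. x \<in> A \<Longrightarrow> y \<in> A \<Longrightarrow> D x y = d (h x) (h y)"
  shows "iso_type A D = iso_type X d"
proof
  show "iso_type A D \<subseteq> iso_type X d" using assms by (rule iso_type_subset)
  let ?k = "inv_into A h"
  have k: "bij_betw ?k X A" using h by (rule bij_betw_inv_into)
  moreover have "d x y = D (?k x) (?k y)" if "x \<in> X" "y \<in> X" for x y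
    using that dist[of "?k x" "?k y"] bij_betwE[OF k] bij_betw_inv_into_right[OF h] by simp
  ultimately show "iso_type X d \<subseteq> iso_type A D" by (rule iso_type_subset)
qed

lemma iso_type_eqD:
  assumes "iso_type X d = iso_type Y e" "finite X"
  obtains h where "bij_betw h X Y" "\<And>x y. x \<in> X \<Longrightarrow> y \<in> X \<Longrightarrow> e (h x) (h y) = d x y"
proof -
  obtain f where f: "bij_betw f {0..<card X} X" using ex_bij_betw_nat_finite assms(2) by blast
  have "({0..<card X}, \<lambda>i j. d (f i) (f j)) \<in> iso_type X d"
    unfolding iso_type_def using f by auto
  then obtain g where g: "bij_betw g {0..<card X} Y"
      "\<forall>i\<in>{0..<card X}. \<forall>j\<in>{0..<card X}. d (f i) (f j) = e (g i) (g j)"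
    using assms(1) unfolding iso_type_def by auto
  let ?k = "inv_into {0..<card X} f"
  have k: "bij_betw ?k X {0..<card X}" using f by (rule bij_betw_inv_into)
  show thesis
  proof
    show "bij_betw (g \<circ> ?k) X Y" using k g(1) by (rule bij_betw_trans)
    fix x y assume "x \<in> X" "y \<in> X"
    then have "?k x \<in> {0..<card X}" "?k y \<in> {0..<card X}" "f (?k x) = x" "f (?k y) = y"
      using bij_betwE[OF k] bij_betw_inv_into_right[OF f] by auto
    then show "e ((g \<circ> ?k) x) ((g \<circ> ?k) y) = d x y" using g(2) by force
  qed
qed

lemma Metric_space_pullback:
  assumes "Metric_space M d" "inj_on f A" "f ` A \<subseteq> M"
  shows "Metric_space A (\<lambda>x y. d (f x) (f y))"
proof -
  interpret Metric_space M d by fact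
  show ?thesis
  proof
    fix x y z
    show "0 \<le> d (f x) (f y)" by (rule nonneg)
    show "d (f x) (f y) = d (f y) (f x)" by (rule commute)
    assume "x \<in> A" "y \<in> A"
    then have "f x \<in> M" "f y \<in> M" using assms(3) by auto
    then show "d (f x) (f y) = 0 \<longleftrightarrow> x = y"
      using zero \<open>x \<in> A\<close> \<open>y \<in> A\<close> assms(2) by (simp add: inj_on_eq_iff)
    assume "z \<in> A"
    then have "f z \<in> M" using assms(3) by auto
    with \<open>f x \<in> M\<close> \<open>f y \<in> M\<close> show "d (f x) (f z) \<le> d (f x) (f y) + d (f y) (f z)"
      by (rule triangle)
  qed
qed

lemma is_fm_type_iso_type:
  assumes "Metric_space M d" "X \<subseteq> M" "finite X"
  shows "is_fm_type (iso_type X d)"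
proof -
  obtain f where f: "bij_betw f {0..<card X} X" using ex_bij_betw_nat_finite assms(3) by blast
  then have "Metric_space {0..<card X} (\<lambda>i j. d (f i) (f j))"
    using assms(2) by (intro Metric_space_pullback[OF assms(1)]) (auto simp: bij_betw_def)
  moreover have "iso_type {0..<card X} (\<lambda>i j. d (f i) (f j)) = iso_type X d"
    using f by (rule iso_type_eqI) simp
  ultimately show ?thesis unfolding is_fm_type_def by (metis finite_atLeastLessThan)
qed

lemma fm_embedsI:
  assumes "(A, D) \<in> \<sigma>" "(B, E) \<in> \<tau>" "inj_on f A" "f ` A \<subseteq> B"
    and "\<And>x y. x \<in> A \<Longrightarrow> y \<in> A \<Longrightarrow> E (f x) (f y) = D x y"
  shows "fm_embeds \<sigma> \<tau>"
  using assms unfolding fm_embeds_def by blast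

lemma fm_embeds_iso_type_subset:
  assumes "X \<subseteq> Z" "finite Z"
  shows "fm_embeds (iso_type X d) (iso_type Z d)"
proof -
  obtain h where h: "bij_betw h {0..<card Z} Z" using ex_bij_betw_nat_finite assms(2) by blast
  let ?A = "inv_into {0..<card Z} h ` X"
  let ?D = "\<lambda>i j. d (h i) (h j)"
  have surj: "h ` {0..<card Z} = Z" using h by (rule bij_betw_imp_surj_on)
  have sub: "?A \<subseteq> {0..<card Z}"
  proof (rule image_subsetI)
    fix x assume "x \<in> X"
    then have "x \<in> h ` {0..<card Z}" using assms(1) surj by blast
    then show "inv_into {0..<card Z} h x \<in> {0..<card Z}" by (rule inv_into_into)
  qed
  have "h ` ?A = X" using surj assms(1) by (rule image_inv_into_cancel)
  then have "bij_betw h ?A X" by (rule bij_betw_subset[OF h sub])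
  moreover have "finite ?A" using assms by (metis finite_subset finite_imageI)
  ultimately have "(?A, ?D) \<in> iso_type X d" unfolding iso_type_def by auto
  moreover have "({0..<card Z}, ?D) \<in> iso_type Z d" unfolding iso_type_def using h by auto
  ultimately show ?thesis by (rule fm_embedsI[where f = id]) (use sub in auto)
qed

lemma fm_embeds_iso_typeE:
  assumes "fm_embeds (iso_type A D) (iso_type X d)"
  obtains Y where "Y \<subseteq> X" "finite Y" "iso_type A D = iso_type Y d"
proof -
  obtain A1 D1 B E f where e: "(A1, D1) \<in> iso_type A D" "(B, E) \<in> iso_type X d"
      "inj_on f A1" "f ` A1 \<subseteq> B" "\<forall>x\<in>A1. \<forall>y\<in>A1. E (f x) (f y) = D1 x y"
    using assms unfolding fm_embeds_def by blast
  obtain g where g: "finite A1" "bij_betw g A1 A" "\<forall>x\<in>A1. \<forall>y\<in>A1. D1 x y = D (g x) (g y)"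
    using e(1) unfolding iso_type_def by blast
  obtain h where h: "bij_betw h B X" "\<forall>x\<in>B. \<forall>y\<in>B. E x y = d (h x) (h y)"
    using e(2) unfolding iso_type_def by blast
  let ?Y = "(h \<circ> f) ` A1"
  have "inj_on (h \<circ> f) A1"
    using e(3,4) h(1) unfolding bij_betw_def by (blast intro: comp_inj_on inj_on_subset)
  then have "bij_betw (h \<circ> f) A1 ?Y" by (simp add: bij_betw_def)
  moreover have "D1 x y = d ((h \<circ> f) x) ((h \<circ> f) y)" if "x \<in> A1" "y \<in> A1" for x y
  proof -
    have "f x \<in> B" "f y \<in> B" using e(4) that by auto
    have "D1 x y = E (f x) (f y)" using e(5) that by simp
    also have "\<dots> = d (h (f x)) (h (f y))" using h(2) \<open>f x \<in> B\<close> \<open>f y \<in> B\<close> by simp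
    finally show ?thesis by simp
  qed
  ultimately have "iso_type A1 D1 = iso_type ?Y d" by (rule iso_type_eqI)
  moreover have "iso_type A1 D1 = iso_type A D"
    using g(2) by (rule iso_type_eqI) (use g(3) in simp)
  moreover have "?Y \<subseteq> X" using e(4) h(1) bij_betwE by fastforce
  moreover have "finite ?Y" using g(1) by simp
  ultimately show thesis using that[of ?Y] by argo
qed

lemma isometry_on_id: "isometry_on M d id"
  unfolding isometry_on_def by simp

lemma isometry_on_image_subset: "isometry_on M d g \<Longrightarrow> X \<subseteq> M \<Longrightarrow> g ` X \<subseteq> M"
  unfolding isometry_on_def bij_betw_def by blast

lemma isometry_on_inj_on: "isometry_on M d g \<Longrightarrow> inj_on g M"
  unfolding isometry_on_def bij_betw_def by blast

lemma iso_type_isometry_image: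
  assumes "isometry_on M d g" "X \<subseteq> M"
  shows "iso_type (g ` X) d = iso_type X d"
proof -
  have "bij_betw g X (g ` X)"
    using inj_on_subset[OF isometry_on_inj_on[OF assms(1)] assms(2)] by (simp add: bij_betw_def)
  then have "iso_type X d = iso_type (g ` X) d"
    by (rule iso_type_eqI) (use assms in \<open>auto simp: isometry_on_def subset_iff\<close>)
  then show ?thesis by simp
qed

lemma mindist_image:
  assumes "inj_on g X" "\<And>x y. x \<in> X \<Longrightarrow> y \<in> X \<Longrightarrow> e (g x) (g y) = d x y"
  shows "mindist (g ` X) e = mindist X d"
  unfolding mindist_def
proof (rule arg_cong[where f = Inf], intro set_eqI iffI)
  fix v assume "v \<in> {ereal (e x y) | x y. x \<in> g ` X \<and> y \<in> g ` X \<and> x \<noteq> y}"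
  then obtain x y where "x \<in> X" "y \<in> X" "g x \<noteq> g y" "v = ereal (e (g x) (g y))" by blast
  with assms(2) show "v \<in> {ereal (d x y) | x y. x \<in> X \<and> y \<in> X \<and> x \<noteq> y}" by force
next
  fix v assume "v \<in> {ereal (d x y) | x y. x \<in> X \<and> y \<in> X \<and> x \<noteq> y}"
  then obtain x y where "x \<in> X" "y \<in> X" "x \<noteq> y" "v = ereal (d x y)" by blast
  with assms show "v \<in> {ereal (e x y) | x y. x \<in> g ` X \<and> y \<in> g ` X \<and> x \<noteq> y}"
    by (force simp: inj_on_eq_iff)
qed

lemma mindist_isometry_image:
  assumes "isometry_on M d g" "X \<subseteq> M"
  shows "mindist (g ` X) d = mindist X d"
  using assms inj_on_subset[OF isometry_on_inj_on[OF assms(1)] assms(2)]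
  by (intro mindist_image) (auto simp: isometry_on_def subset_iff)

lemma isometry_move_apart:
  assumes "Metric_space M d" "\<not> Metric_space.mbounded M d M" "aut_transitive M d"
    and "finite X" "X \<subseteq> M" "finite Y" "Y \<subseteq> M"
  obtains g where "isometry_on M d g" "\<And>x y. x \<in> X \<Longrightarrow> y \<in> Y \<Longrightarrow> r \<le> d x (g y)"
proof (cases "X = {} \<or> Y = {}")
  case True
  then show thesis using that isometry_on_id by blast
next
  case False
  interpret Metric_space M d by fact
  from False obtain x0 y0 where x0: "x0 \<in> X" and y0: "y0 \<in> Y" by blast
  define R where "R = r + (\<Sum>x\<in>X. d x0 x) + (\<Sum>y\<in>Y. d y0 y)"
  have "\<not> M \<subseteq> mcball x0 R" using assms(2) unfolding mbounded_def by blast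
  then obtain z where z: "z \<in> M" "R < d x0 z" using x0 assms(5) by (auto simp: subset_iff)
  obtain g where g: "isometry_on M d g" "g y0 = z"
    using assms(3,7) y0 z(1) unfolding aut_transitive_def by blast
  show thesis
  proof (rule that[OF g(1)])
    fix x y assume xy: "x \<in> X" "y \<in> Y"
    have M: "x0 \<in> M" "x \<in> M" "y \<in> M" "y0 \<in> M" using xy x0 y0 assms(5,7) by auto
    have gy: "g y \<in> M" using isometry_on_image_subset[OF g(1)] M(3) by blast
    have "d (g y) z = d y y0" using g(1) M(3,4) unfolding g(2)[symmetric] isometry_on_def by auto
    moreover have "d x0 z \<le> d x0 x + d x (g y) + d (g y) z"
      using triangle[OF M(1,2) z(1)] triangle[OF M(2) gy z(1)] by linarith
    moreover have "d x0 x \<le> (\<Sum>x\<in>X. d x0 x)"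
      using assms(4) xy(1) by (intro member_le_sum) (auto simp: nonneg)
    moreover have "d y y0 \<le> (\<Sum>y\<in>Y. d y0 y)"
      using assms(6) xy(2) by (subst commute) (intro member_le_sum, auto simp: nonneg)
    ultimately show "r \<le> d x (g y)" using z(2) unfolding R_def by linarith
  qed
qed

lemma mindist_Un_ge:
  assumes "ereal t \<le> mindist X d" "ereal t \<le> mindist Y d"
    and "\<And>x y. x \<in> X \<Longrightarrow> y \<in> Y \<Longrightarrow> t \<le> d x y" "\<And>x y. d x y = d y x"
  shows "ereal t \<le> mindist (X \<union> Y) d"
  unfolding mindist_ge_iff
proof (intro ballI impI)
  fix a b assume "a \<in> X \<union> Y" "b \<in> X \<union> Y" "a \<noteq> b"
  then consider "a \<in> X" "b \<in> X" | "a \<in> Y" "b \<in> Y" | "a \<in> X" "b \<in> Y" | "a \<in> Y" "b \<in> X"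
    by blast
  then show "t \<le> d a b"
  proof cases
    case 1
    with assms(1) \<open>a \<noteq> b\<close> show ?thesis unfolding mindist_ge_iff by blast
  next
    case 2
    with assms(2) \<open>a \<noteq> b\<close> show ?thesis unfolding mindist_ge_iff by blast
  next
    case 3
    with assms(3) show ?thesis by blast
  next
    case 4
    with assms(3)[of b a] assms(4)[of a b] show ?thesis by simp
  qed
qed

lemma age_memI: "X \<subseteq> M \<Longrightarrow> finite X \<Longrightarrow> iso_type X d \<in> age M d"
  unfolding age_def by blast

lemma age_t_memI:
  "X \<subseteq> M \<Longrightarrow> finite X \<Longrightarrow> ereal t \<le> mindist X d \<Longrightarrow> iso_type X d \<in> age_t M d t"
  unfolding age_t_def by blast

lemma age_t_downward_closed:
  assumes "\<tau> \<in> age_t M d t" "is_fm_type \<sigma>" "fm_embeds \<sigma> \<tau>"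
  shows "\<sigma> \<in> age_t M d t"
proof -
  obtain X where X: "\<tau> = iso_type X d" "X \<subseteq> M" "finite X" "ereal t \<le> mindist X d"
    using assms(1) unfolding age_t_def by blast
  obtain A :: "nat set" and D where "\<sigma> = iso_type A D"
    using assms(2) unfolding is_fm_type_def by blast
  with assms(3) X(1) have "fm_embeds (iso_type A D) (iso_type X d)" by simp
  then obtain Y where Y: "Y \<subseteq> X" "finite Y" "\<sigma> = iso_type Y d"
    using \<open>\<sigma> = iso_type A D\<close> by (auto elim: fm_embeds_iso_typeE)
  have "ereal t \<le> mindist Y d" using X(4) mindist_antimono[OF Y(1)] by (rule order_trans)
  then show ?thesis using X(2) Y by (auto intro: age_t_memI)
qed

lemma age_t_directed:
  assumes "Metric_space M d" "\<not> Metric_space.mbounded M d M" "aut_transitive M d"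
    and "\<tau> \<in> age_t M d t" "\<sigma> \<in> age_t M d t"
  shows "\<exists>\<rho>\<in>age_t M d t. fm_embeds \<tau> \<rho> \<and> fm_embeds \<sigma> \<rho>"
proof -
  obtain X Y where X: "\<tau> = iso_type X d" "X \<subseteq> M" "finite X" "ereal t \<le> mindist X d"
    and Y: "\<sigma> = iso_type Y d" "Y \<subseteq> M" "finite Y" "ereal t \<le> mindist Y d"
    using assms(4,5) unfolding age_t_def by blast
  obtain g where g: "isometry_on M d g" and far: "\<And>x y. x \<in> X \<Longrightarrow> y \<in> Y \<Longrightarrow> t \<le> d x (g y)"
    using isometry_move_apart[OF assms(1-3) X(3,2) Y(3,2)] by blast
  define Z where "Z = X \<union> g ` Y"
  have "ereal t \<le> mindist (g ` Y) d" using Y(4) mindist_isometry_image[OF g Y(2)] by simp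
  with X(4) far have "ereal t \<le> mindist Z d"
    unfolding Z_def by (intro mindist_Un_ge) (auto intro: Metric_space.commute[OF assms(1)])
  moreover have Z: "finite Z" "Z \<subseteq> M"
    unfolding Z_def using X(2,3) Y(3) isometry_on_image_subset[OF g Y(2)] by auto
  ultimately have "iso_type Z d \<in> age_t M d t" by (intro age_t_memI)
  moreover have "fm_embeds \<tau> (iso_type Z d)"
    using X(1) fm_embeds_iso_type_subset[of X Z d] Z(1) unfolding Z_def by blast
  moreover have "fm_embeds \<sigma> (iso_type Z d)"
    using Y(1) fm_embeds_iso_type_subset[of "g ` Y" Z d] Z(1) iso_type_isometry_image[OF g Y(2)]
    unfolding Z_def by simp
  ultimately show ?thesis by blast
qed

lemma is_ideal_age_t:
  assumes "Metric_space M d" "\<not> Metric_space.mbounded M d M" "aut_transitive M d"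
  shows "is_ideal (age_t M d t)"
  unfolding is_ideal_def
proof (intro conjI ballI allI impI)
  have "iso_type {} d \<in> age_t M d t" by (rule age_t_memI) (simp_all add: mindist_ge_iff)
  then show "age_t M d t \<noteq> {}" by blast
next
  fix \<tau> assume "\<tau> \<in> age_t M d t"
  then show "is_fm_type \<tau>" unfolding age_t_def using is_fm_type_iso_type[OF assms(1)] by blast
qed (use age_t_downward_closed age_t_directed[OF assms] in blast)+

lemma t_totally_bounded_card_le:
  assumes "t_totally_bounded Y d t"
  obtains N where "\<And>X. X \<subseteq> Y \<Longrightarrow> finite X \<Longrightarrow> ereal t \<le> mindist X d \<Longrightarrow> card X \<le> N"
proof -
  obtain N where N: "omega_t Y d t = enat N"
    using assms unfolding t_totally_bounded_def by (cases "omega_t Y d t") auto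
  have "card X \<le> N" if "X \<subseteq> Y" "finite X" "ereal t \<le> mindist X d" for X
  proof -
    have "enat (card X) \<le> omega_t Y d t"
      unfolding omega_t_def using that by (intro SUP_upper2[of X]) auto
    then show ?thesis using N by simp
  qed
  then show thesis by (rule that)
qed

lemma age_t_copy_in_mcball:
  assumes "Metric_space M d" "aut_transitive M d" "x0 \<in> M"
    and "iso_type G e \<in> age_t M d t" "finite G" "x' \<in> G" "\<And>u. u \<in> G \<Longrightarrow> e x' u \<le> R"
  obtains X where "X \<subseteq> Metric_space.mcball M d x0 R" "finite X" "card X = card G"
    "ereal t \<le> mindist X d"
proof -
  interpret Metric_space M d by fact
  obtain X where X: "iso_type G e = iso_type X d" "X \<subseteq> M" "finite X" "ereal t \<le> mindist X d"
    using assms(4) unfolding age_t_def by auto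
  obtain k where k: "bij_betw k G X" "\<And>a b. a \<in> G \<Longrightarrow> b \<in> G \<Longrightarrow> d (k a) (k b) = e a b"
    using iso_type_eqD[OF X(1) assms(5)] by blast
  have kx': "k x' \<in> X" using bij_betwE[OF k(1)] assms(6) by blast
  then obtain g where g: "isometry_on M d g" "g (k x') = x0"
    using assms(2,3) X(2) unfolding aut_transitive_def by blast
  show thesis
  proof
    show "g ` X \<subseteq> mcball x0 R"
    proof
      fix s assume s: "s \<in> g ` X"
      then obtain u where u: "u \<in> G" "s = g (k u)" using k(1) unfolding bij_betw_def by blast
      have "k u \<in> X" using u(1) bij_betwE[OF k(1)] by blast
      have "d x0 s = d (k x') (k u)"
        using g kx' \<open>k u \<in> X\<close> X(2) u(2) unfolding isometry_on_def by auto
      also have "\<dots> = e x' u" using k(2) u(1) assms(6) by blast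
      also have "\<dots> \<le> R" using u(1) by (rule assms(7))
      finally show "s \<in> mcball x0 R"
        using isometry_on_image_subset[OF g(1) X(2)] s assms(3) by auto
    qed
    show "finite (g ` X)" using X(3) by simp
    have "card (g ` X) = card X"
      using inj_on_subset[OF isometry_on_inj_on[OF g(1)] X(2)] by (rule card_image)
    also have "\<dots> = card G" using k(1) by (simp add: bij_betw_same_card)
    finally show "card (g ` X) = card G" .
    show "ereal t \<le> mindist (g ` X) d" using X(4) mindist_isometry_image[OF g(1) X(2)] by simp
  qed
qed

lemma finite_mcball_if_age_subset_age_t:
  assumes "Metric_space M d" "aut_transitive M d" "x0 \<in> M"
    and "t_totally_bounded (Metric_space.mcball M d x0 R) d t"
    and "Metric_space M' d'" "age M' d' \<subseteq> age_t M d t" "x' \<in> M'" "0 \<le> R"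
  shows "finite (Metric_space.mcball M' d' x' R)"
proof -
  interpret M': Metric_space M' d' by fact
  obtain N where N: "\<And>X. X \<subseteq> Metric_space.mcball M d x0 R \<Longrightarrow> finite X \<Longrightarrow>
      ereal t \<le> mindist X d \<Longrightarrow> card X \<le> N"
    using t_totally_bounded_card_le[OF assms(4)] by blast
  have "finite (M'.mcball x' R) \<and> card (M'.mcball x' R) \<le> N"
  proof (rule finite_if_finite_subsets_card_bdd)
    fix G assume G: "G \<subseteq> M'.mcball x' R" "finite G"
    let ?G = "insert x' G"
    have "?G \<subseteq> M'" "finite ?G" using G assms(7) M'.mcball_subset_mspace by auto
    then have "iso_type ?G d' \<in> age M' d'" by (rule age_memI)
    then have "iso_type ?G d' \<in> age_t M d t" using assms(6) by blast
    moreover have "d' x' u \<le> R" if "u \<in> ?G" for u using that G(1) assms(7,8) by auto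
    ultimately obtain X where "X \<subseteq> Metric_space.mcball M d x0 R" "finite X"
        "card X = card ?G" "ereal t \<le> mindist X d"
      using age_t_copy_in_mcball[OF assms(1-3), of ?G d' t x' R] \<open>finite ?G\<close> by blast
    then have "card ?G \<le> N" using N by metis
    then show "card G \<le> N" using G(2) card_insert_le[of G x'] by linarith
  qed
  then show ?thesis by blast
qed

lemma (in Metric_space) countable_if_finite_mcball:
  assumes "x \<in> M" "\<And>n::nat. finite (mcball x (real n))"
  shows "countable M"
proof -
  have "M \<subseteq> (\<Union>n. mcball x (real n))"
  proof
    fix y assume "y \<in> M"
    obtain n :: nat where "d x y \<le> real n" using real_arch_simple by blast
    with \<open>y \<in> M\<close> assms(1) have "y \<in> mcball x (real n)" by simp
    then show "y \<in> (\<Union>n. mcball x (real n))" by blast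
  qed
  moreover have "countable (\<Union>n. mcball x (real n))"
    using assms(2) by (intro countable_UN) (auto intro: countable_finite)
  ultimately show ?thesis by (rule countable_subset)
qed

lemma countable_if_age_subset_age_t:
  assumes "Metric_space M d" "aut_transitive M d" "M \<noteq> {}"
    and "\<And>x r. x \<in> M \<Longrightarrow> t_totally_bounded (Metric_space.mcball M d x r) d t"
    and "Metric_space M' d'" "age M' d' \<subseteq> age_t M d t"
  shows "countable M'"
proof (cases "M' = {}")
  case False
  then obtain x' where x': "x' \<in> M'" by blast
  from assms(3) obtain x0 where x0: "x0 \<in> M" by blast
  show ?thesis
    using Metric_space.countable_if_finite_mcball[OF assms(5) x']
      finite_mcball_if_age_subset_age_t[OF assms(1,2) x0 assms(4)[OF x0] assms(5,6) x' of_nat_0_le_iff]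
    by blast
qed simp

lemma countable_spec:
  assumes "countable M"
  shows "countable (spec M d)"
proof -
  have "spec M d = (\<lambda>(x, y). d x y) ` (M \<times> M)" unfolding spec_def by auto
  then show ?thesis using assms by simp
qed

lemma spec_subset_if_age_t_subset_age:
  assumes "Metric_space M d" "age_t M d t \<subseteq> age M' d'"
  shows "spec M d \<inter> {t..} \<subseteq> spec M' d'"
proof
  fix r assume "r \<in> spec M d \<inter> {t..}"
  then obtain x y where xy: "x \<in> M" "y \<in> M" "r = d x y" "t \<le> r" unfolding spec_def by auto
  moreover have "d x y = d y x" using assms(1) by (rule Metric_space.commute)
  ultimately have "t \<le> d x y" "t \<le> d y x" by linarith+
  then have "ereal t \<le> mindist {x, y} d" unfolding mindist_ge_iff by auto
  with xy(1,2) have "iso_type {x, y} d \<in> age_t M d t" by (intro age_t_memI) auto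
  then have "iso_type {x, y} d \<in> age M' d'" using assms(2) by blast
  then obtain G where G: "iso_type {x, y} d = iso_type G d'" "G \<subseteq> M'" unfolding age_def by auto
  obtain k where k: "bij_betw k {x, y} G"
      "\<And>a b. a \<in> {x, y} \<Longrightarrow> b \<in> {x, y} \<Longrightarrow> d' (k a) (k b) = d a b"
    using iso_type_eqD[OF G(1)] by blast
  have "k x \<in> M'" "k y \<in> M'" using k(1) G(2) bij_betwE by blast+
  moreover have "r = d' (k x) (k y)" using k(2) xy(3) by simp
  ultimately show "r \<in> spec M' d'" unfolding spec_def by blast
qed

lemma age_t_not_representable:
  assumes "Metric_space M d" "aut_transitive M d" "M \<noteq> {}"
    and "\<And>x r. x \<in> M \<Longrightarrow> t_totally_bounded (Metric_space.mcball M d x r) d t"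
    and "uncountable (spec M d \<inter> {t..})"
  shows "\<not> representable TYPE('b) (age_t M d t)"
proof
  assume "representable TYPE('b) (age_t M d t)"
  then obtain M' :: "'b set" and d' where M': "Metric_space M' d'" and eq: "age_t M d t = age M' d'"
    unfolding representable_def by blast
  have "countable (spec M' d')"
    using countable_if_age_subset_age_t[OF assms(1-4) M'] eq by (simp add: countable_spec)
  moreover have "spec M d \<inter> {t..} \<subseteq> spec M' d'"
    using spec_subset_if_age_t_subset_age[OF assms(1)] eq by blast
  ultimately show False using assms(5) countable_subset by blast
qed

theorem proposition1:
  fixes M :: "'a set" and d :: "'a \<Rightarrow> 'a \<Rightarrow> real" and t :: real
  assumes "Metric_space M d"
    and "\<not> Metric_space.mbounded M d M"
    and "aut_transitive M d"
    and "t > 0"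
    and "uncountable (spec M d \<inter> {t..})"
    and "\<forall>Y. Y \<subseteq> M \<and> Metric_space.mbounded M d Y \<longrightarrow> t_totally_bounded Y d t"
  shows "is_ideal (age_t M d t) \<and> age_t M d t \<subseteq> age M d
         \<and> \<not> representable TYPE('b) (age_t M d t)"
proof -
  interpret Metric_space M d by fact
  have "M \<noteq> {}"
  proof
    assume "M = {}"
    then have "mbounded M" using mbounded_empty by simp
    with assms(2) show False by simp
  qed
  moreover have "t_totally_bounded (mcball x r) d t" for x r
    using assms(6) mbounded_mcball mcball_subset_mspace by blast
  ultimately have "\<not> representable TYPE('b) (age_t M d t)"
    using age_t_not_representable[OF assms(1,3)] assms(5) by blast
  moreover have "age_t M d t \<subseteq> age M d" unfolding age_t_def age_def by blast
  ultimately show ?thesis using is_ideal_age_t[OF assms(1-3)] by blast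
qed

end
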